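(* Let $\nu$ be a vector norm on $\mathbb{R}^n$, let $H=\{x\in\mathbb{R}^n: e^Tx=0\}$ where $e=(1,\ldots,1)^T$, and let $P_1,P_2,\ldots$ be a sequence of $n\times n$ column stochastic matrices. If $\nu^0_H(P_i)\le 1$ for all $i$ and the sequence $\nu^0_H(P_1),\nu^0_H(P_2),\ldots$ has an accumulation point $c$ with $c<1$, then all general products of the sequence are weakly ergodic.
   Context: A column stochastic matrix is a nonnegative matrix each of whose columns sums to $1$; $H$ is invariant under every such matrix. The coefficient of ergodicity is $\nu^0_H(P)=\sup_{0\ne x\in H}\nu(Px)/\nu(x)$. General products: given a permutation $\sigma$ of the positive integers, set $B_i=P_{\sigma(i)}$; for an integer $p\ge0$ and each $r\ge1$, $C_{p,r}$ is a product of $B_{p+1},\ldots,B_{p+r}$, each used exactly once, in some order (chosen arbitrarily and independently for each $r$). All general products are weakly ergodic if for every such choice of $\sigma$, $p$ and orders, $\lim_{r\to\infty}C_{p,r}x=0$ for all $x\in H$. *)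

theory Defs
  imports "HOL-Analysis.Analysis"
begin

definition is_vector_norm :: "(real^'n \<Rightarrow> real) \<Rightarrow> bool" where
  "is_vector_norm \<nu> \<longleftrightarrow>
     (\<forall>x. 0 \<le> \<nu> x) \<and> (\<forall>x. \<nu> x = 0 \<longleftrightarrow> x = 0) \<and>
     (\<forall>c x. \<nu> (c *\<^sub>R x) = \<bar>c\<bar> * \<nu> x) \<and>
     (\<forall>x y. \<nu> (x + y) \<le> \<nu> x + \<nu> y)"

definition Hsp :: "(real^'n) set" where
  "Hsp = {x. (\<Sum>i\<in>UNIV. x $ i) = 0}"

definition column_stochastic :: "real^'n^'n \<Rightarrow> bool" where
  "column_stochastic P \<longleftrightarrow>
     (\<forall>i j. 0 \<le> P $ i $ j) \<and> (\<forall>j. (\<Sum>i\<in>UNIV. P $ i $ j) = 1)"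

definition coeff_erg :: "(real^'n \<Rightarrow> real) \<Rightarrow> real^'n^'n \<Rightarrow> real" where
  "coeff_erg \<nu> P = (SUP x\<in>Hsp - {0}. \<nu> (P *v x) / \<nu> x)"

definition mat_prod_list :: "(real^'n^'n) list \<Rightarrow> real^'n^'n" where
  "mat_prod_list Ms = foldr (\<lambda>A B. A ** B) Ms (mat 1)"

text \<open>General product C_{p,r}: product of B_{p+1},...,B_{p+r} (B_i = P (sigma i))
  taken in the order B_{p + ord r 1}, ..., B_{p + ord r r}, where ord r permutes {1..r}.\<close>
definition general_product ::
  "(nat \<Rightarrow> real^'n^'n) \<Rightarrow> (nat \<Rightarrow> nat) \<Rightarrow> nat \<Rightarrow> (nat \<Rightarrow> nat \<Rightarrow> nat) \<Rightarrow> nat \<Rightarrow> real^'n^'n" where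
  "general_product P \<sigma> p ord r = mat_prod_list (map (\<lambda>k. P (\<sigma> (p + ord r k))) [1..<r+1])"

definition all_general_products_weakly_ergodic :: "(nat \<Rightarrow> real^'n^'n) \<Rightarrow> bool" where
  "all_general_products_weakly_ergodic P \<longleftrightarrow>
     (\<forall>\<sigma> p ord. bij_betw \<sigma> {1..} {1..} \<longrightarrow> (\<forall>r. bij_betw (ord r) {1..r} {1..r}) \<longrightarrow>
        (\<forall>x\<in>Hsp. (\<lambda>r. general_product P \<sigma> p ord r *v x) \<longlonglongrightarrow> 0))"

end

theory Submission
  imports Defs
begin

(*
  On the invariant subspace H every factor is nonexpanding for \<nu>, and every factor whose
  coefficient of ergodicity lies below a fixed q with c < q < 1 contracts by the factor q.
  Since c is an accumulation point, infinitely many P_i are such contractions. As \<sigma> is a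
  bijection, infinitely many B_j are contractions too, and C_{p,r} contains each of
  B_{p+1}, ..., B_{p+r} exactly once whatever the order, so the number k_r of contractions
  among its factors tends to infinity and \<nu>(C_{p,r} x) <= q^{k_r} \<nu>(x) -> 0. Finally \<nu>
  dominates a multiple of the Euclidean norm (all norms on R^n are equivalent).
*)

lemma
  assumes "is_vector_norm \<nu>"
  shows vector_norm_nonneg: "0 \<le> \<nu> x"
    and vector_norm_eq_0_iff: "\<nu> x = 0 \<longleftrightarrow> x = 0"
    and vector_norm_scaleR: "\<nu> (a *\<^sub>R x) = \<bar>a\<bar> * \<nu> x"
    and vector_norm_triangle: "\<nu> (x + y) \<le> \<nu> x + \<nu> y"
  using assms unfolding is_vector_norm_def by auto

lemma vector_norm_0 [simp]: "is_vector_norm \<nu> \<Longrightarrow> \<nu> 0 = 0"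
  by (simp add: vector_norm_eq_0_iff)

lemma vector_norm_pos: "is_vector_norm \<nu> \<Longrightarrow> x \<noteq> 0 \<Longrightarrow> 0 < \<nu> x"
  by (metis less_eq_real_def vector_norm_eq_0_iff vector_norm_nonneg)

lemma vector_norm_minus_commute:
  assumes "is_vector_norm \<nu>"
  shows "\<nu> (x - y) = \<nu> (y - x)"
  using vector_norm_scaleR[OF assms, of "-1" "x - y"] by simp

lemma vector_norm_diff_le:
  assumes "is_vector_norm \<nu>"
  shows "\<bar>\<nu> x - \<nu> y\<bar> \<le> \<nu> (x - y)"
  using vector_norm_triangle[OF assms, of "x - y" y] vector_norm_triangle[OF assms, of "y - x" x]
    vector_norm_minus_commute[OF assms, of x y] by simp

lemma vector_norm_sum_le:
  assumes "is_vector_norm \<nu>"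
  shows "\<nu> (sum f S) \<le> (\<Sum>i\<in>S. \<nu> (f i))"
proof (induction S rule: infinite_finite_induct)
  case (insert a S)
  then show ?case using vector_norm_triangle[OF assms, of "f a" "sum f S"] by simp
qed (use assms in simp_all)

lemma vector_norm_le_const_norm:
  fixes \<nu> :: "real^'n \<Rightarrow> real"
  assumes "is_vector_norm \<nu>"
  obtains C where "C > 0" "\<And>x. \<nu> x \<le> C * norm x"
proof
  define C where "C = (\<Sum>i\<in>UNIV. \<nu> (axis i 1)) + 1"
  show "C > 0"
    unfolding C_def by (smt (verit) sum_nonneg vector_norm_nonneg[OF assms])
  fix x :: "real^'n"
  have "\<nu> x = \<nu> (\<Sum>i\<in>UNIV. x $ i *\<^sub>R axis i 1)"
    using basis_expansion[of x] by (simp add: scalar_mult_eq_scaleR)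
  also have "\<dots> \<le> (\<Sum>i\<in>UNIV. \<nu> (x $ i *\<^sub>R axis i 1))"
    by (rule vector_norm_sum_le[OF assms])
  also have "\<dots> = (\<Sum>i\<in>UNIV. \<bar>x $ i\<bar> * \<nu> (axis i 1))"
    by (simp add: vector_norm_scaleR[OF assms])
  also have "\<dots> \<le> (\<Sum>i\<in>UNIV. norm x * \<nu> (axis i 1))"
    by (intro sum_mono mult_right_mono component_le_norm_cart vector_norm_nonneg[OF assms])
  also have "\<dots> \<le> C * norm x"
    unfolding C_def by (simp add: sum_distrib_left algebra_simps)
  finally show "\<nu> x \<le> C * norm x" .
qed

lemma vector_norm_lipschitz:
  fixes \<nu> :: "real^'n \<Rightarrow> real"
  assumes "is_vector_norm \<nu>"
  obtains C where "C-lipschitz_on UNIV \<nu>"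
proof -
  obtain C where "C > 0" "\<And>x. \<nu> x \<le> C * norm x"
    using vector_norm_le_const_norm[OF assms] by blast
  then have "C-lipschitz_on UNIV \<nu>"
    using order_trans[OF vector_norm_diff_le[OF assms]]
    by (intro lipschitz_onI) (simp_all add: dist_real_def dist_norm)
  then show ?thesis ..
qed

lemma vector_norm_ge_const_norm:
  fixes \<nu> :: "real^'n \<Rightarrow> real"
  assumes "is_vector_norm \<nu>"
  obtains c where "c > 0" "\<And>x. c * norm x \<le> \<nu> x"
proof -
  obtain C where "C-lipschitz_on UNIV \<nu>"
    using vector_norm_lipschitz[OF assms] .
  then have "continuous_on (sphere 0 1) \<nu>"
    by (meson continuous_on_subset lipschitz_on_continuous_on subset_UNIV)
  moreover have "sphere (0::real^'n) 1 \<noteq> {}"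
    using norm_axis_1 by (metis mem_sphere_0 empty_iff)
  ultimately obtain u where u: "norm u = 1" "\<And>y. norm y = 1 \<Longrightarrow> \<nu> u \<le> \<nu> y"
    using continuous_attains_inf[OF compact_sphere] by (metis mem_sphere_0)
  have "\<nu> u * norm y \<le> \<nu> y" for y
  proof (cases "y = 0")
    case False
    have "\<nu> u \<le> \<nu> (inverse (norm y) *\<^sub>R y)" using u(2) False by simp
    then show ?thesis using False by (simp add: vector_norm_scaleR[OF assms] field_simps)
  qed (use assms in simp)
  moreover have "\<nu> u > 0" using u(1) by (intro vector_norm_pos[OF assms]) auto
  ultimately show ?thesis using that by blast
qed

lemma vector_norm_tendsto_0_imp_tendsto_0:
  fixes \<nu> :: "real^'n \<Rightarrow> real"
  assumes "is_vector_norm \<nu>" "((\<lambda>r. \<nu> (y r)) \<longlongrightarrow> 0) F"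
  shows "(y \<longlongrightarrow> 0) F"
proof -
  obtain c where c: "c > 0" "\<And>x. c * norm x \<le> \<nu> x"
    using vector_norm_ge_const_norm[OF assms(1)] by blast
  have "norm (y r) \<le> \<nu> (y r) / c" for r
    using c by (simp add: field_simps mult.commute)
  then show ?thesis
    using Lim_null_comparison[of y "\<lambda>r. \<nu> (y r) / c"] tendsto_divide_zero[OF assms(2)]
    by simp
qed

lemma column_stochastic_mult_Hsp:
  assumes "column_stochastic P" "x \<in> Hsp"
  shows "P *v x \<in> Hsp"
proof -
  have "(\<Sum>i\<in>UNIV. (P *v x) $ i) = (\<Sum>i\<in>UNIV. \<Sum>j\<in>UNIV. P $ i $ j * x $ j)"
    by (simp add: matrix_vector_mult_def)
  also have "\<dots> = (\<Sum>j\<in>UNIV. \<Sum>i\<in>UNIV. P $ i $ j * x $ j)"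
    by (rule sum.swap)
  also have "\<dots> = (\<Sum>j\<in>UNIV. x $ j)"
    using assms(1) by (simp add: column_stochastic_def flip: sum_distrib_right)
  finally show ?thesis using assms(2) by (simp add: Hsp_def)
qed

lemma bdd_above_vector_norm_quotients:
  fixes \<nu> :: "real^'n \<Rightarrow> real" and P :: "real^'n^'n"
  assumes "is_vector_norm \<nu>"
  shows "bdd_above (range (\<lambda>x. \<nu> (P *v x) / \<nu> x))"
proof -
  obtain C where C: "C > 0" "\<And>x. \<nu> x \<le> C * norm x"
    using vector_norm_le_const_norm[OF assms] by blast
  obtain c where c: "c > 0" "\<And>x. c * norm x \<le> \<nu> x"
    using vector_norm_ge_const_norm[OF assms] by blast
  obtain K where K: "K > 0" "\<And>x. norm (P *v x) \<le> norm x * K"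
    using bounded_linear.pos_bounded[OF matrix_vector_mul_bounded_linear] by blast
  have "\<nu> (P *v x) / \<nu> x \<le> C * K / c" for x
  proof (cases "x = 0")
    case False
    have "\<nu> (P *v x) \<le> C * (norm x * K)"
      using C K by (meson mult_left_mono less_imp_le order_trans)
    also have "\<dots> = (C * K / c) * (c * norm x)" using c(1) by simp
    also have "\<dots> \<le> (C * K / c) * \<nu> x" using c C K by (intro mult_left_mono) auto
    finally show ?thesis using vector_norm_pos[OF assms False] by (simp add: divide_le_eq)
  qed (use assms C(1) K(1) c(1) in simp)
  then show ?thesis by (intro bdd_aboveI2)
qed

lemma vector_norm_mult_le_coeff_erg:
  fixes \<nu> :: "real^'n \<Rightarrow> real"
  assumes "is_vector_norm \<nu>" "x \<in> Hsp"
  shows "\<nu> (P *v x) \<le> coeff_erg \<nu> P * \<nu> x"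
proof (cases "x = 0")
  case False
  have "\<nu> (P *v x) / \<nu> x \<le> coeff_erg \<nu> P"
    unfolding coeff_erg_def using assms(2) False
    by (intro cSUP_upper bdd_above_mono[OF bdd_above_vector_norm_quotients[OF assms(1)]]) auto
  then show ?thesis
    using vector_norm_pos[OF assms(1) False] by (simp add: divide_le_eq mult.commute)
qed (use assms in simp)

lemma mat_prod_list_Hsp:
  assumes "\<forall>A\<in>set Ms. column_stochastic A" "x \<in> Hsp"
  shows "mat_prod_list Ms *v x \<in> Hsp"
  using assms(1)
proof (induction Ms)
  case (Cons A Ms)
  then show ?case
    by (simp add: mat_prod_list_def column_stochastic_mult_Hsp flip: matrix_vector_mul_assoc)
qed (simp add: mat_prod_list_def assms(2))

lemma vector_norm_mat_prod_list_le:
  fixes \<nu> :: "real^'n \<Rightarrow> real"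
  assumes "is_vector_norm \<nu>" "0 \<le> q"
    and "\<forall>A\<in>set Ms. column_stochastic A \<and> coeff_erg \<nu> A \<le> 1" "x \<in> Hsp"
  shows "\<nu> (mat_prod_list Ms *v x) \<le> q ^ length (filter (\<lambda>A. coeff_erg \<nu> A < q) Ms) * \<nu> x"
  using assms(3)
proof (induction Ms)
  case (Cons A Ms)
  define y where "y = mat_prod_list Ms *v x"
  define k where "k = length (filter (\<lambda>A. coeff_erg \<nu> A < q) Ms)"
  have IH: "\<nu> y \<le> q ^ k * \<nu> x" using Cons unfolding y_def k_def by auto
  have "y \<in> Hsp" unfolding y_def using Cons.prems assms(4) by (intro mat_prod_list_Hsp) auto
  then have Ay: "\<nu> (A *v y) \<le> coeff_erg \<nu> A * \<nu> y"
    by (rule vector_norm_mult_le_coeff_erg[OF assms(1)])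
  have "mat_prod_list (A # Ms) *v x = A *v y"
    by (simp add: mat_prod_list_def y_def matrix_vector_mul_assoc)
  moreover have "\<nu> (A *v y) \<le> (if coeff_erg \<nu> A < q then q else 1) * \<nu> y"
    using Ay Cons.prems vector_norm_nonneg[OF assms(1), of y]
    by (smt (verit) mult_right_mono list.set_intros(1))
  moreover have "(if coeff_erg \<nu> A < q then q else 1) * \<nu> y
      \<le> q ^ length (filter (\<lambda>A. coeff_erg \<nu> A < q) (A # Ms)) * \<nu> x"
    using IH assms(2) by (simp add: k_def mult_left_mono mult.assoc)
  ultimately show ?case by simp
qed (simp add: mat_prod_list_def)

lemma length_filter_map_permuted:
  assumes "bij_betw \<pi> {1..r} {1..r}"
  shows "length (filter Q (map (\<lambda>k. f (\<pi> k)) [1..<r+1])) = card {j\<in>{1..r}. Q (f j)}"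
proof -
  have "length (filter Q (map (\<lambda>k. f (\<pi> k)) [1..<r+1]))
      = length (filter (\<lambda>k. Q (f (\<pi> k))) [1..<r+1])"
    by (simp add: filter_map comp_def)
  also have "\<dots> = card ({k. Q (f (\<pi> k))} \<inter> set [1..<r+1])"
    by (rule distinct_length_filter) simp
  also have "set [1..<r+1] = {1..r}"
    by (simp only: set_upt atLeastLessThanSuc_atLeastAtMost flip: Suc_eq_plus1)
  also have "{k. Q (f (\<pi> k))} \<inter> {1..r} = {k\<in>{1..r}. Q (f (\<pi> k))}"
    by blast
  also have "card \<dots> = card (\<pi> ` {k\<in>{1..r}. Q (f (\<pi> k))})"
    by (rule card_image[symmetric], rule inj_on_subset[OF bij_betw_imp_inj_on[OF assms]]) blast
  also have "\<pi> ` {k\<in>{1..r}. Q (f (\<pi> k))} = {j\<in>{1..r}. Q (f j)}"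
  proof (intro equalityI subsetI)
    fix j assume j: "j \<in> {j\<in>{1..r}. Q (f j)}"
    then obtain k where "k \<in> {1..r}" "j = \<pi> k"
      using bij_betw_imp_surj_on[OF assms] by (metis (no_types, lifting) imageE mem_Collect_eq)
    with j show "j \<in> \<pi> ` {k\<in>{1..r}. Q (f (\<pi> k))}" by auto
  qed (use bij_betw_apply[OF assms] in auto)
  finally show ?thesis .
qed

lemma infinite_Int_atLeast:
  fixes A :: "nat set"
  assumes "infinite A"
  shows "infinite (A \<inter> {m..})"
proof
  assume "finite (A \<inter> {m..})"
  moreover have "A \<subseteq> (A \<inter> {m..}) \<union> {..<m}" by auto
  ultimately show False using assms finite_subset by blast
qed

lemma infinite_shift_vimage:
  fixes K :: "nat set"
  assumes "infinite K"
  shows "infinite {j. p + j \<in> K}"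
proof
  assume "finite {j. p + j \<in> K}"
  then have "finite ((+) p ` {j. p + j \<in> K})" by blast
  moreover have "K \<inter> {p..} \<subseteq> (+) p ` {j. p + j \<in> K}"
    by (auto simp: image_iff) (metis le_add_diff_inverse)
  ultimately show False using infinite_Int_atLeast[OF assms] finite_subset by blast
qed

lemma infinite_shifted_bij_vimage:
  fixes \<sigma> :: "nat \<Rightarrow> nat"
  assumes "bij_betw \<sigma> {1..} {1..}" "infinite I"
  shows "infinite {j. \<sigma> (p + j) \<in> I}"
proof -
  have "I \<inter> {1..} \<subseteq> \<sigma> ` {k\<in>{1..}. \<sigma> k \<in> I}"
  proof
    fix i assume i: "i \<in> I \<inter> {1..}"
    then obtain k where "k \<in> {1..}" "i = \<sigma> k"
      using bij_betw_imp_surj_on[OF assms(1)] by (metis IntD2 imageE)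
    then show "i \<in> \<sigma> ` {k\<in>{1..}. \<sigma> k \<in> I}" using i by blast
  qed
  then have "infinite {k\<in>{1..}. \<sigma> k \<in> I}"
    using infinite_Int_atLeast[OF assms(2)] finite_subset by blast
  then show ?thesis
    by (rule infinite_super[OF _ infinite_shift_vimage[of _ p], rotated]) auto
qed

lemma card_atLeastAtMost_filter_tendsto_at_top:
  assumes "infinite {j::nat. Q j}"
  shows "filterlim (\<lambda>r. card {j\<in>{1..r}. Q j}) at_top sequentially"
  unfolding filterlim_at_top eventually_sequentially
proof
  fix m
  obtain F where F: "F \<subseteq> {j. Q j} \<inter> {1..}" "finite F" "card F = m"
    using infinite_arbitrarily_large[OF infinite_Int_atLeast[OF assms]] by blast
  obtain R where R: "F \<subseteq> {..<R}" using finite_nat_bounded[OF F(2)] by blast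
  have "m \<le> card {j\<in>{1..r}. Q j}" if "r \<ge> R" for r
  proof -
    have "F \<subseteq> {j\<in>{1..r}. Q j}" using F(1) R that by auto
    then show ?thesis unfolding F(3)[symmetric] by (intro card_mono) auto
  qed
  then show "\<exists>R. \<forall>r\<ge>R. m \<le> card {j\<in>{1..r}. Q j}" by blast
qed

lemma infinite_below_accumulation_point:
  fixes a :: "nat \<Rightarrow> real"
  assumes "\<forall>\<epsilon>>0. \<forall>N. \<exists>i>N. \<bar>a i - c\<bar> < \<epsilon>" "c < q"
  shows "infinite {i. a i < q}"
  unfolding infinite_nat_iff_unbounded
proof
  fix N
  obtain i where "i > N" "\<bar>a i - c\<bar> < q - c"
    using assms(1)[rule_format, of "q - c" N] assms(2) by auto
  then show "\<exists>i>N. i \<in> {i. a i < q}" by auto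
qed

theorem all_general_products_weakly_ergodic_if_infinitely_often_contracting:
  fixes \<nu> :: "real^'n \<Rightarrow> real" and P :: "nat \<Rightarrow> real^'n^'n" and q :: real
  assumes \<nu>: "is_vector_norm \<nu>"
    and stochastic: "\<And>i. i \<ge> 1 \<Longrightarrow> column_stochastic (P i)"
    and nonexpanding: "\<And>i. i \<ge> 1 \<Longrightarrow> coeff_erg \<nu> (P i) \<le> 1"
    and q: "0 \<le> q" "q < 1"
    and contracting: "infinite {i. coeff_erg \<nu> (P i) < q}"
  shows "all_general_products_weakly_ergodic P"
  unfolding all_general_products_weakly_ergodic_def
proof (intro allI impI ballI)
  fix \<sigma> :: "nat \<Rightarrow> nat" and p :: nat and ord :: "nat \<Rightarrow> nat \<Rightarrow> nat" and x :: "real^'n"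
  assume \<sigma>: "bij_betw \<sigma> {1..} {1..}" and ord: "\<forall>r. bij_betw (ord r) {1..r} {1..r}"
    and x: "x \<in> Hsp"
  define B where "B j = P (\<sigma> (p + j))" for j
  define k where "k r = card {j\<in>{1..r}. coeff_erg \<nu> (B j) < q}" for r
  have factors: "general_product P \<sigma> p ord r = mat_prod_list (map (\<lambda>i. B (ord r i)) [1..<r+1])"
    for r unfolding general_product_def B_def ..
  have B: "column_stochastic (B j) \<and> coeff_erg \<nu> (B j) \<le> 1" if "j \<ge> 1" for j
    using bij_betw_apply[OF \<sigma>, of "p + j"] that stochastic nonexpanding unfolding B_def by simp
  have bound: "\<nu> (general_product P \<sigma> p ord r *v x) \<le> q ^ k r * \<nu> x" for r
  proof -
    have "ord r i \<ge> 1" if "i \<in> set [1..<r+1]" for i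
      using bij_betw_apply[OF ord[rule_format, of r], of i] that by auto
    then have "\<forall>A\<in>set (map (\<lambda>i. B (ord r i)) [1..<r+1]). column_stochastic A \<and> coeff_erg \<nu> A \<le> 1"
      using B by auto
    from vector_norm_mat_prod_list_le[OF \<nu> q(1) this x] show ?thesis
      unfolding factors k_def length_filter_map_permuted[OF ord[rule_format]] .
  qed
  have lim: "((\<lambda>r. q ^ k r * \<nu> x) \<longlongrightarrow> 0) sequentially"
  proof -
    have "infinite {j. coeff_erg \<nu> (B j) < q}"
      using infinite_shifted_bij_vimage[OF \<sigma> contracting] unfolding B_def by simp
    then have "filterlim k at_top sequentially"
      unfolding k_def by (rule card_atLeastAtMost_filter_tendsto_at_top)
    with q have "((\<lambda>r. q ^ k r) \<longlongrightarrow> 0) sequentially"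
      by (intro filterlim_compose[OF LIMSEQ_power_zero]) simp_all
    then show ?thesis by (rule tendsto_mult_left_zero)
  qed
  have "((\<lambda>r. \<nu> (general_product P \<sigma> p ord r *v x)) \<longlongrightarrow> 0) sequentially"
    by (rule tendsto_sandwich[OF _ _ tendsto_const lim])
      (intro always_eventually allI vector_norm_nonneg[OF \<nu>] bound)+
  then show "(\<lambda>r. general_product P \<sigma> p ord r *v x) \<longlonglongrightarrow> 0"
    by (rule vector_norm_tendsto_0_imp_tendsto_0[OF \<nu>])
qed

theorem corollary4p4:
  fixes \<nu> :: "real^'n \<Rightarrow> real" and P :: "nat \<Rightarrow> real^'n^'n" and c :: real
  assumes "is_vector_norm \<nu>"
    and "\<And>i. i \<ge> 1 \<Longrightarrow> column_stochastic (P i)"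
    and "\<And>i. i \<ge> 1 \<Longrightarrow> coeff_erg \<nu> (P i) \<le> 1"
    and "\<forall>\<epsilon>>0. \<forall>N. \<exists>i>N. \<bar>coeff_erg \<nu> (P i) - c\<bar> < \<epsilon>"
    and "c < 1"
  shows "all_general_products_weakly_ergodic P"
proof -
  define q where "q = max ((1 + c) / 2) 0"
  have q: "0 \<le> q" "q < 1" "c < q"
    using assms(5) unfolding q_def by (auto simp: less_max_iff_disj)
  show ?thesis
    using assms(1-3) q(1,2) infinite_below_accumulation_point[OF assms(4) q(3)]
    by (rule all_general_products_weakly_ergodic_if_infinitely_often_contracting)
qed

end
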